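(* Let $\Phi$ be an irreducible crystallographic root system with simple system $S$ and positive system $\Phi^+$, let $k$ be a positive integer, and let $\mathcal{I}=(I_1,\ldots,I_k)$ be a geometric chain of $k$ ideals in the root poset of $\Phi$, with $\underline{\mathcal{I}}=(\underline{I}_1,\ldots,\underline{I}_{k+1})$ defined by $\underline{I}_i=I_i$ for $i\le k$ and $\underline{I}_{k+1}=\bigcup_{i+j=k+1}((I_i+I_j)\cap\Phi^+)\cup I_k\cup S$. Let $\mathsf{supp}(\mathcal{I})=I_k\cap S$. If $\alpha\in\Phi^+$ is a nonnegative integer linear combination of elements of $\mathsf{supp}(\mathcal{I})$, then $r_\alpha(\underline{\mathcal{I}})=r_\alpha(\mathcal{I})$. In particular, if $\alpha\in\Phi^+$ satisfies $r_\alpha(\underline{\mathcal{I}})\le k$, then $r_\alpha(\underline{\mathcal{I}})=r_\alpha(\mathcal{I})$.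
   Context: The root poset is $\Phi^+$ with $\alpha\le\beta$ iff $\beta-\alpha$ is a nonnegative integer combination of $S$; ideals are down-closed subsets. Sumsets: $A+B=\{a+b\mid a\in A,b\in B\}$. An ascending chain $I_1\subseteq\cdots\subseteq I_K$ of ideals, with $J_i=\Phi^+\setminus I_i$, is geometric if $(I_i+I_j)\cap\Phi^+\subseteq I_{i+j}$ for all $i,j\in\{0,\ldots,K\}$ with $i+j\le K$, and $(J_i+J_j)\cap\Phi^+\subseteq J_{i+j}$ for all $i,j\in\{0,\ldots,K\}$, where $I_0=\varnothing$, $J_0=\Phi^+$, $J_i=J_K$ for $i>K$. (In the definition of $\underline{I}_{k+1}$, $i,j\in\{0,\ldots,k\}$.) For a chain $\mathcal{I}=(I_1,\ldots,I_K)$ and $\alpha\in\Phi^+$, $r_\alpha(\mathcal{I})=\min\{r_1+\cdots+r_m\mid\alpha=\alpha_1+\cdots+\alpha_m,\ \alpha_i\in I_{r_i},\ r_i\in\{1,\ldots,K\}\}$, with $r_\alpha(\mathcal{I})=\infty$ if no such decomposition exists. *)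

theory Defs
  imports "HOL-Analysis.Analysis" "HOL-Library.Extended_Nat"
begin

definition root_system :: "'a::euclidean_space set \<Rightarrow> bool" where
  "root_system \<Phi> \<longleftrightarrow>
     finite \<Phi> \<and> 0 \<notin> \<Phi> \<and> span \<Phi> = UNIV \<and>
     (\<forall>\<alpha>\<in>\<Phi>. \<forall>c::real. c *\<^sub>R \<alpha> \<in> \<Phi> \<longleftrightarrow> c = 1 \<or> c = -1) \<and>
     (\<forall>\<alpha>\<in>\<Phi>. \<forall>\<beta>\<in>\<Phi>. \<beta> - (2 * (\<beta> \<bullet> \<alpha>) / (\<alpha> \<bullet> \<alpha>)) *\<^sub>R \<alpha> \<in> \<Phi>)"

definition crystallographic :: "'a::euclidean_space set \<Rightarrow> bool" where
  "crystallographic \<Phi> \<longleftrightarrow> (\<forall>\<alpha>\<in>\<Phi>. \<forall>\<beta>\<in>\<Phi>. 2 * (\<beta> \<bullet> \<alpha>) / (\<alpha> \<bullet> \<alpha>) \<in> \<int>)"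

definition irreducible_rs :: "'a::euclidean_space set \<Rightarrow> bool" where
  "irreducible_rs \<Phi> \<longleftrightarrow>
     \<not> (\<exists>A B. A \<noteq> {} \<and> B \<noteq> {} \<and> A \<union> B = \<Phi> \<and> A \<inter> B = {} \<and>
            (\<forall>a\<in>A. \<forall>b\<in>B. a \<bullet> b = 0))"

definition nonneg_comb :: "'a::euclidean_space set \<Rightarrow> 'a \<Rightarrow> bool" where
  "nonneg_comb S x \<longleftrightarrow> (\<exists>c::'a \<Rightarrow> real. (\<forall>s\<in>S. c s \<ge> 0) \<and> x = (\<Sum>s\<in>S. c s *\<^sub>R s))"

definition nat_comb :: "'a::euclidean_space set \<Rightarrow> 'a \<Rightarrow> bool" where
  "nat_comb S x \<longleftrightarrow> (\<exists>c::'a \<Rightarrow> nat. x = (\<Sum>s\<in>S. of_nat (c s) *\<^sub>R s))"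

definition simple_system :: "'a::euclidean_space set \<Rightarrow> 'a set \<Rightarrow> bool" where
  "simple_system \<Phi> S \<longleftrightarrow> S \<subseteq> \<Phi> \<and> independent S \<and>
     (\<forall>\<alpha>\<in>\<Phi>. nonneg_comb S \<alpha> \<or> nonneg_comb S (- \<alpha>))"

definition positive_roots :: "'a::euclidean_space set \<Rightarrow> 'a set \<Rightarrow> 'a set" where
  "positive_roots \<Phi> S = {\<alpha>\<in>\<Phi>. nonneg_comb S \<alpha>}"

definition root_le :: "'a::euclidean_space set \<Rightarrow> 'a \<Rightarrow> 'a \<Rightarrow> bool" where
  "root_le S \<alpha> \<beta> \<longleftrightarrow> nat_comb S (\<beta> - \<alpha>)"

definition root_ideal :: "'a::euclidean_space set \<Rightarrow> 'a set \<Rightarrow> 'a set \<Rightarrow> bool" where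
  "root_ideal Pp S I \<longleftrightarrow> I \<subseteq> Pp \<and> (\<forall>\<beta>\<in>I. \<forall>\<alpha>\<in>Pp. root_le S \<alpha> \<beta> \<longrightarrow> \<alpha> \<in> I)"

definition sumset :: "'a::plus set \<Rightarrow> 'a set \<Rightarrow> 'a set" where
  "sumset A B = {a + b |a b. a \<in> A \<and> b \<in> B}"

text \<open>A chain is given as I :: nat => 'a set with members I 1, ..., I K.
  Extended chain: I_0 = {} and I_i = I_K for i > K (only used for J_i).\<close>
definition chainI :: "(nat \<Rightarrow> 'a set) \<Rightarrow> nat \<Rightarrow> nat \<Rightarrow> 'a set" where
  "chainI I K i = (if i = 0 then {} else I (min i K))"

definition chainJ :: "'a set \<Rightarrow> (nat \<Rightarrow> 'a set) \<Rightarrow> nat \<Rightarrow> nat \<Rightarrow> 'a set" where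
  "chainJ Pp I K i = Pp - chainI I K i"

definition ascending_ideal_chain ::
  "'a::euclidean_space set \<Rightarrow> 'a set \<Rightarrow> (nat \<Rightarrow> 'a set) \<Rightarrow> nat \<Rightarrow> bool" where
  "ascending_ideal_chain Pp S I K \<longleftrightarrow>
     (\<forall>i\<in>{1..K}. root_ideal Pp S (I i)) \<and> (\<forall>i. 1 \<le> i \<and> i < K \<longrightarrow> I i \<subseteq> I (Suc i))"

definition geometric_chain ::
  "'a::euclidean_space set \<Rightarrow> 'a set \<Rightarrow> (nat \<Rightarrow> 'a set) \<Rightarrow> nat \<Rightarrow> bool" where
  "geometric_chain Pp S I K \<longleftrightarrow> ascending_ideal_chain Pp S I K \<and>
     (\<forall>i\<le>K. \<forall>j\<le>K. i + j \<le> K \<longrightarrow>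
        sumset (chainI I K i) (chainI I K j) \<inter> Pp \<subseteq> chainI I K (i + j)) \<and>
     (\<forall>i\<le>K. \<forall>j\<le>K.
        sumset (chainJ Pp I K i) (chainJ Pp I K j) \<inter> Pp \<subseteq> chainJ Pp I K (i + j))"

definition under_chain ::
  "'a::euclidean_space set \<Rightarrow> 'a set \<Rightarrow> (nat \<Rightarrow> 'a set) \<Rightarrow> nat \<Rightarrow> nat \<Rightarrow> 'a set" where
  "under_chain Pp S I k i =
     (if i \<le> k then I i
      else if i = k + 1 then
        (\<Union>i'\<in>{0..k}. \<Union>j\<in>{0..k}. if i' + j = k + 1
            then sumset (chainI I k i') (chainI I k j) \<inter> Pp else {}) \<union> I k \<union> S
      else {})"

definition r_alpha :: "(nat \<Rightarrow> 'a::monoid_add set) \<Rightarrow> nat \<Rightarrow> 'a \<Rightarrow> enat" where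
  "r_alpha I K \<alpha> = (INF xs \<in> {xs :: ('a \<times> nat) list. xs \<noteq> [] \<and>
        (\<forall>(\<beta>, r)\<in>set xs. r \<in> {1..K} \<and> \<beta> \<in> I r) \<and> \<alpha> = sum_list (map fst xs)}.
        enat (sum_list (map snd xs)))"

end

theory Submission
  imports Defs
begin

text \<open>
  Write \<open>U\<close> for the extended chain. Every decomposition of \<alpha> for \<open>I\<close> is one for \<open>U\<close>,
  so \<open>r\<^sub>\<alpha>(U) \<le> r\<^sub>\<alpha>(I)\<close>. If \<open>r\<^sub>\<alpha>(U) \<le> k\<close>, an optimal decomposition for \<open>U\<close> has no
  summand of rank \<open>k + 1\<close> and is thus one for \<open>I\<close>. Otherwise, a summand of rank \<open>k + 1\<close>
  lies in \<open>I\<^sub>k\<close>, in some \<open>(I\<^sub>i + I\<^sub>j) \<inter> \<Phi>\<^sup>+\<close> with \<open>i + j = k + 1\<close>, or in \<open>S\<close>; in the first two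
  cases it is replaced by at most two summands for \<open>I\<close> of total rank at most \<open>k + 1\<close>.
  When \<alpha> is supported on \<open>I\<^sub>k \<inter> S\<close>, the third case reduces to the first: all summands
  have nonnegative simple-root coordinates, so a simple root outside \<open>I\<^sub>k\<close>, at which the
  coordinate of \<alpha> vanishes, cannot occur.
\<close>

definition chain_decomps :: "(nat \<Rightarrow> 'a::monoid_add set) \<Rightarrow> nat \<Rightarrow> 'a \<Rightarrow> ('a \<times> nat) list set" where
  "chain_decomps I K \<alpha> = {xs. xs \<noteq> [] \<and> (\<forall>(\<beta>, r)\<in>set xs. r \<in> {1..K} \<and> \<beta> \<in> I r) \<and>
     \<alpha> = sum_list (map fst xs)}"

abbreviation decomp_rank :: "('a \<times> nat) list \<Rightarrow> nat" where
  "decomp_rank xs \<equiv> sum_list (map snd xs)"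

lemma r_alpha_eq_INF_chain_decomps:
  "r_alpha I K \<alpha> = (INF xs\<in>chain_decomps I K \<alpha>. enat (decomp_rank xs))"
  unfolding r_alpha_def chain_decomps_def ..

lemma r_alpha_le_decomp_rank:
  "xs \<in> chain_decomps I K \<alpha> \<Longrightarrow> r_alpha I K \<alpha> \<le> enat (decomp_rank xs)"
  unfolding r_alpha_eq_INF_chain_decomps by (rule INF_lower)

lemma r_alpha_attained:
  assumes "r_alpha I K \<alpha> \<noteq> \<infinity>"
  obtains xs where "xs \<in> chain_decomps I K \<alpha>" "r_alpha I K \<alpha> = enat (decomp_rank xs)"
proof -
  let ?R = "(\<lambda>xs. enat (decomp_rank xs)) ` chain_decomps I K \<alpha>"
  have "?R \<noteq> {}"
    using assms unfolding r_alpha_eq_INF_chain_decomps by (auto simp: top_enat_def)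
  then have "Inf ?R \<in> ?R" by (auto intro: wellorder_InfI)
  then show ?thesis using that unfolding r_alpha_eq_INF_chain_decomps by auto
qed

lemma chain_decomps_append:
  "xs \<in> chain_decomps I K a \<Longrightarrow> ys \<in> chain_decomps I K b \<Longrightarrow> xs @ ys \<in> chain_decomps I K (a + b)"
  unfolding chain_decomps_def by auto

lemma chain_decomps_mono:
  assumes "\<And>r. r \<in> {1..K} \<Longrightarrow> I r \<subseteq> J r" and "K \<le> L"
  shows "chain_decomps I K \<alpha> \<subseteq> chain_decomps J L \<alpha>"
  using assms unfolding chain_decomps_def by fastforce

lemma r_alpha_mono:
  assumes "\<And>r. r \<in> {1..K} \<Longrightarrow> I r \<subseteq> J r" and "K \<le> L"
  shows "r_alpha J L \<alpha> \<le> r_alpha I K \<alpha>"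
  unfolding r_alpha_eq_INF_chain_decomps
  by (rule INF_superset_mono[OF chain_decomps_mono[OF assms] order_refl])

lemma chain_decomps_concat:
  assumes "zs \<noteq> []" and "\<forall>(b, q)\<in>set zs. \<exists>ys\<in>chain_decomps I K b. decomp_rank ys \<le> q"
  shows "\<exists>ys\<in>chain_decomps I K (sum_list (map fst zs)). decomp_rank ys \<le> decomp_rank zs"
  using assms
proof (induction zs)
  case Nil
  then show ?case by simp
next
  case (Cons z zs)
  obtain b q where z: "z = (b, q)" by fastforce
  with Cons.prems obtain ys where ys: "ys \<in> chain_decomps I K b" "decomp_rank ys \<le> q" by auto
  show ?case
  proof (cases "zs = []")
    case True
    then show ?thesis using z ys by auto
  next
    case False
    with Cons obtain ys' where ys': "ys' \<in> chain_decomps I K (sum_list (map fst zs))"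
      "decomp_rank ys' \<le> decomp_rank zs" by auto
    show ?thesis
      using chain_decomps_append[OF ys(1) ys'(1)] ys(2) ys'(2) z by (intro bexI[of _ "ys @ ys'"]) auto
  qed
qed

lemma r_alpha_le_if_refinable:
  assumes "\<And>xs b q. xs \<in> chain_decomps J L \<alpha> \<Longrightarrow> (b, q) \<in> set xs \<Longrightarrow>
             \<exists>ys\<in>chain_decomps I K b. decomp_rank ys \<le> q"
  shows "r_alpha I K \<alpha> \<le> r_alpha J L \<alpha>"
  unfolding r_alpha_eq_INF_chain_decomps
proof (rule INF_mono)
  fix xs assume xs: "xs \<in> chain_decomps J L \<alpha>"
  then have "xs \<noteq> []" "\<alpha> = sum_list (map fst xs)" unfolding chain_decomps_def by auto
  with chain_decomps_concat[of xs I K] assms[OF xs]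
  show "\<exists>ys\<in>chain_decomps I K \<alpha>. enat (decomp_rank ys) \<le> enat (decomp_rank xs)" by auto
qed

lemma r_alpha_truncate:
  assumes "\<And>r. r \<in> {1..K} \<Longrightarrow> J r = I r" and "K \<le> L" and "r_alpha J L \<alpha> \<le> enat K"
  shows "r_alpha J L \<alpha> = r_alpha I K \<alpha>"
proof (rule antisym)
  show "r_alpha J L \<alpha> \<le> r_alpha I K \<alpha>" using assms(1,2) by (intro r_alpha_mono) auto
  obtain xs where xs: "xs \<in> chain_decomps J L \<alpha>" "r_alpha J L \<alpha> = enat (decomp_rank xs)"
    using assms(3) r_alpha_attained by (metis enat_ord_simps(5) infinity_ileE)
  then have "decomp_rank xs \<le> K" using assms(3) by simp
  then have "r \<le> K" if "(\<beta>, r) \<in> set xs" for \<beta> r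
    using member_le_sum_list[of r "map snd xs"] that by force
  with xs(1) assms(1) have "xs \<in> chain_decomps I K \<alpha>" unfolding chain_decomps_def by fastforce
  then show "r_alpha I K \<alpha> \<le> r_alpha J L \<alpha>" using xs(2) by (simp add: r_alpha_le_decomp_rank)
qed

lemma linear_sum_list:
  assumes "linear g"
  shows "g (sum_list xs) = sum_list (map g xs)"
  by (induction xs) (auto simp: linear_add[OF assms] linear_0[OF assms])

lemma nonneg_comb_member:
  assumes "finite S" and "s \<in> S"
  shows "nonneg_comb S s"
proof -
  have "(\<Sum>x\<in>S. (if x = s then 1 else 0) *\<^sub>R x) = (\<Sum>x\<in>S. if x = s then x else 0)"
    by (rule sum.cong) auto
  then show ?thesis
    unfolding nonneg_comb_def using assms by (intro exI[of _ "\<lambda>x. if x = s then 1 else 0"]) (simp add: sum.delta)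
qed

lemma linear_nonneg_on_nonneg_comb:
  fixes g :: "'a::euclidean_space \<Rightarrow> real"
  assumes "linear g" and "\<And>s. s \<in> S \<Longrightarrow> 0 \<le> g s" and "nonneg_comb S x"
  shows "0 \<le> g x"
proof -
  obtain c where c: "\<forall>s\<in>S. 0 \<le> c s" "x = (\<Sum>s\<in>S. c s *\<^sub>R s)"
    using assms(3) unfolding nonneg_comb_def by blast
  have "g x = (\<Sum>s\<in>S. c s * g s)"
    using c(2) by (simp add: linear_sum[OF assms(1)] linear_cmul[OF assms(1)])
  also have "\<dots> \<ge> 0" using c(1) assms(2) by (intro sum_nonneg) auto
  finally show ?thesis .
qed

text \<open>The coordinate at \<open>b\<close> vanishes on \<alpha>, is nonnegative on every summand and equals
  \<open>1\<close> on \<open>b\<close> itself.\<close>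
lemma simple_summand_in_support:
  fixes S T :: "'a::euclidean_space set"
  assumes "independent S" and "T \<subseteq> S" and "nat_comb T \<alpha>"
    and "\<And>x. x \<in> set xs \<Longrightarrow> nonneg_comb S x" and "\<alpha> = sum_list xs"
    and "b \<in> set xs" and "b \<in> S"
  shows "b \<in> T"
proof (rule ccontr)
  assume "b \<notin> T"
  obtain g :: "'a \<Rightarrow> real" where g: "linear g" "\<forall>s\<in>S. g s = (if s = b then 1 else 0)"
    using linear_independent_extend[OF assms(1), of "\<lambda>s. if s = b then 1 else 0"] by blast
  obtain c where c: "\<alpha> = (\<Sum>s\<in>T. of_nat (c s) *\<^sub>R s)"
    using assms(3) unfolding nat_comb_def by blast
  have "g \<alpha> = (\<Sum>s\<in>T. of_nat (c s) * g s)"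
    unfolding c by (simp add: linear_sum[OF g(1)] linear_cmul[OF g(1)])
  also have "\<dots> = 0"
  proof (rule sum.neutral, rule ballI)
    fix s assume "s \<in> T"
    then have "g s = 0" using g(2) assms(2) \<open>b \<notin> T\<close> by auto
    then show "of_nat (c s) * g s = 0" by simp
  qed
  finally have "g \<alpha> = 0" .
  have coord_nonneg: "0 \<le> g s" if "s \<in> S" for s
    using g(2) that by simp
  have nonneg: "0 \<le> y" if "y \<in> set (map g xs)" for y
  proof -
    from that obtain x where x: "x \<in> set xs" "y = g x" by auto
    show ?thesis
      unfolding x(2) by (rule linear_nonneg_on_nonneg_comb[OF g(1) coord_nonneg assms(4)[OF x(1)]])
  qed
  have "1 = g b" using g(2) assms(7) by simp
  also have "\<dots> \<le> sum_list (map g xs)" using assms(6) nonneg by (intro member_le_sum_list) auto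
  also have "\<dots> = g \<alpha>" using assms(5) by (simp add: linear_sum_list[OF g(1)])
  finally show False using \<open>g \<alpha> = 0\<close> by simp
qed

lemma under_chain_low: "i \<le> k \<Longrightarrow> under_chain P S I k i = I i"
  unfolding under_chain_def by simp

lemma under_chain_subset:
  assumes "\<And>r. r \<in> {1..k} \<Longrightarrow> I r \<subseteq> P" and "1 \<le> k" and "q \<in> {1..k + 1}"
  shows "under_chain P S I k q \<subseteq> P \<union> S"
  using assms(1)[of q] assms(1)[of k] assms(2,3)
  unfolding under_chain_def by (auto split: if_splits)

lemma under_chain_top_refinable:
  assumes "1 \<le> k" and "b \<in> under_chain P S I k (k + 1)" and "b \<in> S \<Longrightarrow> b \<in> I k"
  shows "\<exists>ys\<in>chain_decomps I k b. decomp_rank ys \<le> k + 1"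
proof (cases "b \<in> I k")
  case True
  then show ?thesis using assms(1) unfolding chain_decomps_def by (intro bexI[of _ "[(b, k)]"]) auto
next
  case False
  then obtain i j where ij: "i \<le> k" "j \<le> k" "i + j = k + 1"
    and b: "b \<in> sumset (chainI I k i) (chainI I k j)"
    using assms(2,3) unfolding under_chain_def by (auto split: if_splits)
  then have "i \<noteq> 0" "j \<noteq> 0" by auto
  with ij b obtain a1 a2 where "a1 \<in> I i" "a2 \<in> I j" "b = a1 + a2"
    unfolding chainI_def sumset_def by auto
  with ij \<open>i \<noteq> 0\<close> \<open>j \<noteq> 0\<close> show ?thesis
    unfolding chain_decomps_def by (intro bexI[of _ "[(a1, i), (a2, j)]"]) auto
qed

lemma under_chain_refinable:
  assumes "1 \<le> k" and "q \<in> {1..k + 1}" and "b \<in> under_chain P S I k q" and "b \<in> S \<Longrightarrow> b \<in> I k"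
  shows "\<exists>ys\<in>chain_decomps I k b. decomp_rank ys \<le> q"
proof (cases "q \<le> k")
  case True
  then show ?thesis using assms(2,3) under_chain_low[OF True]
    unfolding chain_decomps_def by (intro bexI[of _ "[(b, q)]"]) auto
next
  case False
  then have "q = k + 1" using assms(2) by simp
  then show ?thesis using assms under_chain_top_refinable[of k b P S I] by simp
qed

lemma r_alpha_under_chain_eq_if_supported:
  fixes S P :: "'a::euclidean_space set"
  assumes "finite S" and "independent S" and "\<And>x. x \<in> P \<Longrightarrow> nonneg_comb S x"
    and "\<And>r. r \<in> {1..k} \<Longrightarrow> I r \<subseteq> P" and "1 \<le> k" and supp: "nat_comb (I k \<inter> S) \<alpha>"
  shows "r_alpha (under_chain P S I k) (k + 1) \<alpha> = r_alpha I k \<alpha>"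
proof (rule antisym)
  show "r_alpha (under_chain P S I k) (k + 1) \<alpha> \<le> r_alpha I k \<alpha>"
    by (intro r_alpha_mono) (auto simp: under_chain_low)
  show "r_alpha I k \<alpha> \<le> r_alpha (under_chain P S I k) (k + 1) \<alpha>"
  proof (rule r_alpha_le_if_refinable)
    fix xs b q assume xs: "xs \<in> chain_decomps (under_chain P S I k) (k + 1) \<alpha>" and bq: "(b, q) \<in> set xs"
    have summands: "nonneg_comb S x" if "x \<in> set (map fst xs)" for x
      using that xs under_chain_subset[OF assms(4,5)] nonneg_comb_member[OF assms(1)] assms(3)
      unfolding chain_decomps_def by fastforce
    have "b \<in> set (map fst xs)" using bq by force
    then have "b \<in> S \<Longrightarrow> b \<in> I k"
      using simple_summand_in_support[OF assms(2) Int_lower2 supp summands] xs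
      unfolding chain_decomps_def by blast
    moreover have "q \<in> {1..k + 1}" "b \<in> under_chain P S I k q"
      using xs bq unfolding chain_decomps_def by auto
    ultimately show "\<exists>ys\<in>chain_decomps I k b. decomp_rank ys \<le> q"
      using under_chain_refinable[OF assms(5)] by blast
  qed
qed

theorem lemma10:
  fixes \<Phi> S :: "'a::euclidean_space set" and I :: "nat \<Rightarrow> 'a set" and k :: nat and \<alpha> :: 'a
  assumes "root_system \<Phi>" and "crystallographic \<Phi>" and "irreducible_rs \<Phi>"
    and "simple_system \<Phi> S"
    and "k \<ge> 1"
    and "geometric_chain (positive_roots \<Phi> S) S I k"
    and "\<alpha> \<in> positive_roots \<Phi> S"
  shows "(nat_comb (I k \<inter> S) \<alpha> \<longrightarrow>
           r_alpha (under_chain (positive_roots \<Phi> S) S I k) (k + 1) \<alpha> = r_alpha I k \<alpha>)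
       \<and> (r_alpha (under_chain (positive_roots \<Phi> S) S I k) (k + 1) \<alpha> \<le> enat k \<longrightarrow>
           r_alpha (under_chain (positive_roots \<Phi> S) S I k) (k + 1) \<alpha> = r_alpha I k \<alpha>)"
proof -
  let ?P = "positive_roots \<Phi> S"
  have "S \<subseteq> \<Phi>" and indep: "independent S" using assms(4) unfolding simple_system_def by auto
  then have "finite S" using assms(1) finite_subset unfolding root_system_def by blast
  have positive: "\<And>x. x \<in> ?P \<Longrightarrow> nonneg_comb S x" by (simp add: positive_roots_def)
  have ideals: "\<And>r. r \<in> {1..k} \<Longrightarrow> I r \<subseteq> ?P" using assms(6)
    unfolding geometric_chain_def ascending_ideal_chain_def root_ideal_def by blast
  have "r_alpha (under_chain ?P S I k) (k + 1) \<alpha> = r_alpha I k \<alpha>" if "nat_comb (I k \<inter> S) \<alpha>"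
    using r_alpha_under_chain_eq_if_supported[where I = I, OF \<open>finite S\<close> indep positive ideals assms(5)] that
    by blast
  moreover have "r_alpha (under_chain ?P S I k) (k + 1) \<alpha> = r_alpha I k \<alpha>"
    if "r_alpha (under_chain ?P S I k) (k + 1) \<alpha> \<le> enat k"
    using that by (intro r_alpha_truncate) (auto simp: under_chain_low)
  ultimately show ?thesis by blast
qed

end
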